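(* For all integers $n\ge0$ and $0\le k\le n$, $$\sum_{i=0}^{\lfloor\frac{n+1}{2}\rfloor}\frac{(-1)^i}{n+1-i}\binom{n+1-i}{i}\binom{2n-2k-2i}{n-k-i} = \frac{(-1)^{n-k}}{n+1}\binom{k}{n-k}.$$ In particular the left-hand side vanishes when $2k<n$.
   Context: Binomial coefficients use the convention $\binom{a}{b}=0$ if $b<0$ or $b>a$ (in particular $\binom{2m}{m}=0$ for $m<0$). *)

theory Defs
  imports Complex_Main
begin

definition binomZ :: "int \<Rightarrow> int \<Rightarrow> int" where
  "binomZ a b = (if 0 \<le> b \<and> b \<le> a then int (nat a choose nat b) else 0)"

end

theory Submission imports Defs begin

(* Write L(N,i) = binom(N-i,i) + binom(N-i-1,i-1); for 0 \<le> i < N this equals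
   N/(N-i) * binom(N-i,i), so with N = n+1 and m = n-k the left-hand side of the theorem is
   (1/N) * S(N,m), where
       S(N,m) = \<Sum>i\<le>m. (-1)^i L(N,i) binom(2(m-i), m-i)
   is a convolution of Lucas-polynomial coefficients with central binomial coefficients.
   Pascal's rule gives L(N+2,i) = L(N+1,i) + L(N,i-1), hence the Fibonacci-like recurrence
   S(N+2,m+1) = S(N+1,m+1) - S(N,m).  The closed form
       R(N,m) = (-1)^m binom(N-1-m, m) + 2 binom(2m-N, m-N)
   satisfies the same recurrence (again by Pascal's rule) and the same initial values at
   N = 1, 2, so S = R for all N \<ge> 1 by a two-step induction on N.  For N = n+1, m = n-k
   the second term of R vanishes and the first one is the right-hand side of the theorem. *)

text \<open>Pascal's rule holds for all integer arguments except at a = -1, b = 0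
  (where binomZ 0 0 = 1 but both summands are 0).\<close>
lemma binomZ_pascal:
  assumes "a \<noteq> -1 \<or> b \<noteq> 0"
  shows "binomZ (a+1) b = binomZ a b + binomZ a (b-1)"
proof (cases "a \<ge> 0 \<and> b \<ge> 1")
  case True
  then obtain p q where "a = int p" and "b = int (Suc q)"
    by (intro that[of "nat a" "nat (b-1)"]) auto
  with True show ?thesis
    unfolding binomZ_def by (simp add: nat_add_distrib)
next
  case False
  with assms show ?thesis unfolding binomZ_def by auto
qed

lemma binomZ_absorption:
  assumes "a \<ge> 1"
  shows "a * binomZ (a-1) (b-1) = b * binomZ a b"
proof (cases "b \<ge> 1")
  case True
  obtain p where p: "a = int (Suc p)" using assms by (intro that[of "nat (a-1)"]) auto
  obtain q where q: "b = int (Suc q)" using True by (intro that[of "nat (b-1)"]) auto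
  have "int (Suc p) * int (p choose q) = int (Suc q) * int (Suc p choose Suc q)"
    using Suc_times_binomial_eq[of p q] by (metis mult.commute of_nat_mult)
  moreover have "binomZ (a-1) (b-1) = int (p choose q)" unfolding binomZ_def p q by auto
  moreover have "binomZ a b = int (Suc p choose Suc q)"
    unfolding binomZ_def p q nat_int
    using binomial_eq_0[of "Suc p" "Suc q"] by (auto simp del: binomial_Suc_Suc)
  ultimately show ?thesis using p q by simp
next
  case False
  then show ?thesis unfolding binomZ_def by auto
qed

lemma binomZ_central:
  assumes "m \<ge> 1"
  shows "binomZ (2*m) m = 2 * binomZ (2*m-1) (m-1)"
proof -
  obtain q where q: "m = int (Suc q)" using assms by (intro that[of "nat (m-1)"]) auto
  have "nat (2*m) = Suc (2*q+1)" "nat (2*m-1) = 2*q+1" "nat m = Suc q" "nat (m-1) = q"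
    using q by auto
  moreover have "(2*q+1 choose Suc q) = (2*q+1 choose q)"
    using binomial_symmetric[of q "2*q+1"] by simp
  ultimately show ?thesis unfolding binomZ_def using q by auto
qed

definition central :: "int \<Rightarrow> int" where
  "central j = binomZ (2*j) j"

lemma central_neg: "j < 0 \<Longrightarrow> central j = 0"
  unfolding central_def binomZ_def by auto

text \<open>lucas N i is the i-th coefficient of the N-th Lucas polynomial, N/(N-i) binom(N-i,i).\<close>
definition lucas :: "int \<Rightarrow> int \<Rightarrow> int" where
  "lucas N i = binomZ (N-i) i + binomZ (N-i-1) (i-1)"

lemma lucas_neg: "i < 0 \<Longrightarrow> lucas N i = 0"
  unfolding lucas_def binomZ_def by auto

lemma lucas_recurrence:
  assumes "N \<ge> 1"
  shows "lucas (N+2) i = lucas (N+1) i + lucas N (i-1)"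
proof -
  have "binomZ (N+2-i) i = binomZ (N+1-i) i + binomZ (N+1-i) (i-1)"
    using binomZ_pascal[of "N+1-i" i] assms by (auto simp: algebra_simps)
  moreover have "binomZ (N+1-i) (i-1) = binomZ (N-i) (i-1) + binomZ (N-i) (i-1-1)"
    using binomZ_pascal[of "N-i" "i-1"] assms by (auto simp: algebra_simps)
  ultimately show ?thesis unfolding lucas_def by (simp add: algebra_simps)
qed

lemma lucas_absorption:
  assumes "N - i \<ge> 1"
  shows "(N - i) * lucas N i = N * binomZ (N-i) i"
  using binomZ_absorption[OF assms, of i] unfolding lucas_def by (simp add: algebra_simps)

definition conv :: "int \<Rightarrow> nat \<Rightarrow> int" where
  "conv N m = (\<Sum>i\<le>m. (-1)^i * lucas N (int i) * central (int m - int i))"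

definition closed_form :: "int \<Rightarrow> nat \<Rightarrow> int" where
  "closed_form N m = (-1)^m * binomZ (N-1-int m) (int m) + 2 * binomZ (2*int m-N) (int m-N)"

text \<open>Fibonacci-type recurrence of S in N; the shifted Lucas term L(N,i-1) contributes
  -S(N,m) after reindexing the sum, its i = 0 term being zero.\<close>
lemma conv_recurrence:
  assumes "N \<ge> 1"
  shows "conv (N+2) (Suc m) = conv (N+1) (Suc m) - conv N m"
proof -
  have "conv (N+2) (Suc m) = conv (N+1) (Suc m)
     + (\<Sum>i\<le>Suc m. (-1)^i * lucas N (int i - 1) * central (int (Suc m) - int i))"
    unfolding conv_def lucas_recurrence[OF assms] by (simp add: algebra_simps sum.distrib)
  also have "(\<Sum>i\<le>Suc m. (-1)^i * lucas N (int i - 1) * central (int (Suc m) - int i))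
      = - conv N m"
    unfolding sum.atMost_Suc_shift conv_def by (simp add: lucas_neg sum_negf)
  finally show ?thesis by simp
qed

lemma closed_form_recurrence:
  assumes "N \<ge> 1"
  shows "closed_form (N+2) (Suc m) = closed_form (N+1) (Suc m) - closed_form N m"
proof -
  have "binomZ (N+2-1-int (Suc m)) (int (Suc m))
      = binomZ (N-1-int m) (int (Suc m)) + binomZ (N-1-int m) (int m)"
    using binomZ_pascal[of "N-1-int m" "int (Suc m)"] assms by (auto simp: algebra_simps)
  moreover have "binomZ (2*int (Suc m) - (N+1)) (int (Suc m) - (N+1))
      = binomZ (2*int m - N) (int m - N)
        + binomZ (2*int (Suc m) - (N+2)) (int (Suc m) - (N+2))"
    using binomZ_pascal[of "2*int m - N" "int m - N"] assms by (auto simp: algebra_simps)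
  ultimately show ?thesis unfolding closed_form_def by (simp add: algebra_simps)
qed

lemma conv_closed_zero: "N \<ge> 1 \<Longrightarrow> conv N 0 = closed_form N 0"
  unfolding conv_def closed_form_def lucas_def central_def binomZ_def by auto

lemma conv_closed_one: "conv 1 m = closed_form 1 m"
proof -
  have "lucas 1 (int i) = (if i = 0 then 1 else 0)" for i
    unfolding lucas_def binomZ_def by auto
  then have "conv 1 m = (\<Sum>i\<le>m. if i = 0 then central (int m) else 0)"
    unfolding conv_def by (intro sum.cong) auto
  then have conv_one: "conv 1 m = central (int m)" by simp
  show ?thesis
  proof (cases m)
    case (Suc q)
    have "binomZ (- int m) (int m) = 0" unfolding binomZ_def using Suc by simp
    with binomZ_central[of "int m"] show ?thesis
      unfolding conv_one closed_form_def central_def using Suc by simp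
  qed (use conv_one in \<open>simp add: closed_form_def central_def binomZ_def\<close>)
qed

lemma conv_closed_two: "conv 2 m = closed_form 2 m"
proof (cases m)
  case (Suc q)
  have "lucas 2 (int i) = (if i = 0 then 1 else if i = 1 then 2 else 0)" for i
    unfolding lucas_def binomZ_def by auto
  then have "conv 2 m = (\<Sum>i\<le>m. (if i = 0 then central (int m) else 0)
                              + (if i = 1 then - 2 * central (int q) else 0))"
    unfolding conv_def by (intro sum.cong) (auto simp: Suc)
  then have "conv 2 m = central (int q + 1) - 2 * central (int q)"
    using Suc by (simp add: sum.distrib add.commute)
  moreover have "central (int q + 1) = 2 * binomZ (2*int q+1) (int q)"
    unfolding central_def using binomZ_central[of "int q + 1"] by (simp add: algebra_simps)
  moreover have "binomZ (2*int q+1) (int q)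
      = binomZ (2*int q) (int q) + binomZ (2*int q) (int q - 1)"
    using binomZ_pascal[of "2*int q" "int q"] by simp
  moreover have "binomZ (1 - int (Suc q)) (int (Suc q)) = 0" unfolding binomZ_def by simp
  ultimately show ?thesis unfolding closed_form_def Suc central_def by (simp add: algebra_simps)
qed (simp add: conv_closed_zero)

lemma conv_eq_closed_form: "conv (int n + 1) m = closed_form (int n + 1) m"
proof (induction n arbitrary: m rule: less_induct)
  case (less n)
  show ?case
  proof (cases "n < 2")
    case True
    then have "n = 0 \<or> n = 1" by linarith
    then show ?thesis using conv_closed_one conv_closed_two by auto
  next
    case False
    then obtain p where n: "n = p + 2" by (intro that[of "n - 2"]) simp
    show ?thesis
    proof (cases m)
      case (Suc q)
      have "conv (int (p+1) + 1) (Suc q) = closed_form (int (p+1) + 1) (Suc q)"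
        using less.IH[of "p+1"] n by simp
      moreover have "conv (int p + 1) q = closed_form (int p + 1) q"
        using less.IH[of p] n by simp
      ultimately show ?thesis
        using conv_recurrence[of "int p + 1" q] closed_form_recurrence[of "int p + 1" q] n Suc
        by (simp add: algebra_simps)
    qed (simp add: conv_closed_zero)
  qed
qed

text \<open>The real-valued sum of the theorem, with N = n+1, equals conv N m / N: summands with
  i > N div 2 vanish by the binomial coefficient, those with i > m by the central one.\<close>
lemma lucas_sum_eq_conv:
  assumes "N \<ge> 1"
  shows "(\<Sum>i\<in>{0..N div 2}. (-1::real) ^ nat i / real_of_int (N - i)
            * real_of_int (binomZ (N - i) i) * real_of_int (central (int m - i)))
         = real_of_int (conv N m) / real_of_int N"
proof -
  define g where "g i = (-1::real) ^ nat i / real_of_int (N - i)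
                          * real_of_int (binomZ (N - i) i) * real_of_int (central (int m - i))" for i
  define f where "f i = (-1::real) ^ i * lucas N (int i) * central (int m - int i)" for i
  define M where "M = max (nat N) m"
  have summand: "g (int i) = f i / N" if "int i < N" for i
  proof -
    have "(N - int i) * lucas N (int i) = N * binomZ (N - int i) (int i)"
      using lucas_absorption[of N "int i"] that by simp
    then have "real_of_int (N - int i) * lucas N (int i) = N * binomZ (N - int i) (int i)"
      by (metis of_int_mult)
    then have binom: "real_of_int (binomZ (N - int i) (int i))
                        = real_of_int (N - int i) * lucas N (int i) / N"
      using assms by (simp add: field_simps)
    show ?thesis using that unfolding g_def f_def binom by (simp add: field_simps)
  qed
  have "{0..N div 2} = int ` {..nat (N div 2)}"
    using assms by (auto simp: image_iff intro!: bexI[where x="nat _"])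
  then have "(\<Sum>i\<in>{0..N div 2}. g i) = (\<Sum>i\<le>nat (N div 2). g (int i))"
    by (simp add: sum.reindex)
  also have "\<dots> = (\<Sum>i\<le>nat (N div 2). f i / N)"
    using assms by (intro sum.cong) (auto simp: summand)
  also have "\<dots> = (\<Sum>i\<le>M. f i) / N"
    unfolding sum_divide_distrib
  proof (rule sum.mono_neutral_left)
    show "\<forall>i\<in>{..M} - {..nat (N div 2)}. f i / N = 0"
      unfolding f_def lucas_def binomZ_def by auto
  qed (auto simp: M_def)
  also have "(\<Sum>i\<le>M. f i) = (\<Sum>i\<le>m. f i)"
    by (rule sum.mono_neutral_right) (auto simp: M_def f_def central_neg)
  also have "\<dots> = conv N m" unfolding f_def conv_def by simp
  finally show ?thesis unfolding g_def .
qed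

theorem mainTheorem13:
  fixes n k :: int
  assumes "0 \<le> n" and "0 \<le> k" and "k \<le> n"
  shows "(\<Sum>i\<in>{0..(n+1) div 2}.
            (-1::real) ^ nat i / real_of_int (n + 1 - i)
            * real_of_int (binomZ (n + 1 - i) i)
            * real_of_int (binomZ (2*n - 2*k - 2*i) (n - k - i)))
         = (-1::real) ^ nat (n - k) / real_of_int (n + 1) * real_of_int (binomZ k (n - k))"
proof -
  define m where "m = nat (n - k)"
  have "binomZ (2*n - 2*k - 2*i) (n - k - i) = central (int m - i)" for i
    unfolding central_def m_def using assms by (simp add: algebra_simps)
  then have "(\<Sum>i\<in>{0..(n+1) div 2}. (-1::real) ^ nat i / real_of_int (n + 1 - i)
            * real_of_int (binomZ (n + 1 - i) i)
            * real_of_int (binomZ (2*n - 2*k - 2*i) (n - k - i)))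
        = real_of_int (conv (n+1) m) / real_of_int (n+1)"
    using lucas_sum_eq_conv[of "n+1" m] assms by simp
  also have "conv (n+1) m = closed_form (n+1) m"
    using conv_eq_closed_form[of "nat n" m] assms by simp
  also have "closed_form (n+1) m = (-1)^m * binomZ k (n-k)"
    unfolding closed_form_def binomZ_def using assms by (simp add: m_def)
  finally show ?thesis unfolding m_def by simp
qed

end
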